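(* Let $F(X)=c_0+c_1X+\cdots+c_{d-1}X^{d-1}+X^d\in\mathbb{Z}[X]$ be monic irreducible, $\xi$ a fixed root, and $L=\mathbb{Q}(\xi)$ Galois over $\mathbb{Q}$ of degree $d$ with $G=\mathrm{Gal}(L/\mathbb{Q})$. Assume $\{\sigma\xi\}_{\sigma\in G}$ is a normal basis of $L/\mathbb{Q}$. Let $K_1,\dots,K_r$ be the conjugacy classes of $G$ and let $(a_{K_j,i})_{i\ge0}$ be the sequence with characteristic polynomial $F$ whose first $d$ terms are the $j$-th column of $P\Gamma_\xi^{-1}\kappa$, where $P=[\sigma^{-1}(\xi^{i-1})]_{1\le i\le d,\sigma\in G}$, $\Gamma_\xi=[\sigma\tau^{-1}(\xi)]_{\sigma,\tau\in G}$, and $\kappa=[\kappa_{\tau,j}]_{\tau\in G,1\le j\le r}$ with $\kappa_{\tau,j}=1$ if $\tau\in K_j$ and $0$ otherwise. Let $\{X_\sigma\}_{\sigma\in G}$ be indeterminates, $\Gamma=[X_{\sigma\tau^{-1}}]_{\sigma,\tau\in G}$ the group matrix, and $\partial_\tau=\frac{1}{|G|}\frac{\partial\det\Gamma}{\partial X_\tau}$. Denote by $\partial_\tau(\xi)$ and $\det\Gamma_\xi$ the values obtained by substituting $X_\sigma\mapsto\sigma\xi$ for all $\sigma$. Then for every integer $i\ge0$, $$a_{K_j,i}=\frac{1}{\det\Gamma_\xi}\sum_{\sigma\in G}\sum_{\tau\in K_j}\sigma(\xi^i)\,\partial_{\sigma\tau}(\xi).$$ Moreover, regard $G$ as a subgroup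 of the symmetric group $S_d$ via its (simply transitive) action on the $d$ roots $\{\sigma\xi\}$ of $F$. If $G\subset A_d$, then $$a_{K_j,i}=\frac{1}{\det\Gamma_\xi}\mathrm{Tr}_G\Big(\xi^i\sum_{\tau\in K_j}\partial_\tau(\xi)\Big).$$ If $G\not\subset A_d$, set $G^+=G\cap A_d$ and choose $\delta\in G$ with $G=G^+\sqcup\delta G^+$; then $$a_{K_j,i}=\frac{1}{\det\Gamma_\xi}\big(\mathrm{Tr}_{G^+}-\delta\circ\mathrm{Tr}_{G^+}\big)\Big(\xi^i\sum_{\tau\in K_j}\partial_\tau(\xi)\Big).$$
   Context: Matrices indexed by $G$ use a fixed total order on $G$. A sequence $(a_i)$ has characteristic polynomial $F$ if $a_{n+d}=-\sum_{k=0}^{d-1}c_ka_{n+k}$ for all $n\ge0$. For a subgroup $H\le G$, $\mathrm{Tr}_H(x)=\sum_{h\in H}h(x)$ for $x\in L$. *)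

theory Defs
  imports "Jordan_Normal_Form.Gauss_Jordan_Elimination" "Jordan_Normal_Form.Determinant"
    "HOL-Combinatorics.Permutations"
begin

text \<open>Field automorphisms of the (field) type 'a. When 'a is Q(xi), this is Gal(L/Q).\<close>
definition field_auts :: "('a::field_char_0 \<Rightarrow> 'a) set" where
  "field_auts = {s. bij s \<and> (\<forall>x y. s (x + y) = s x + s y) \<and> (\<forall>x y. s (x * y) = s x * s y)
                 \<and> s 1 = 1}"

definition normal_basis :: "('a::field_char_0 \<Rightarrow> 'a) set \<Rightarrow> 'a \<Rightarrow> bool" where
  "normal_basis G xi \<longleftrightarrow>
     (\<forall>c :: ('a \<Rightarrow> 'a) \<Rightarrow> rat. (\<Sum>s\<in>G. of_rat (c s) * s xi) = 0 \<longrightarrow> (\<forall>s\<in>G. c s = 0)) \<and>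
     (\<forall>x. \<exists>c :: ('a \<Rightarrow> 'a) \<Rightarrow> rat. x = (\<Sum>s\<in>G. of_rat (c s) * s xi))"

text \<open>Matrices indexed by G, using the total order of G given by the enumeration e of G.\<close>
definition Gamma_xi :: "nat \<Rightarrow> (nat \<Rightarrow> 'a \<Rightarrow> 'a) \<Rightarrow> 'a \<Rightarrow> 'a::field mat" where
  "Gamma_xi d e xi = mat d d (\<lambda>(i,k). (e i \<circ> inv_into UNIV (e k)) xi)"

definition P_mat :: "nat \<Rightarrow> (nat \<Rightarrow> 'a \<Rightarrow> 'a) \<Rightarrow> 'a \<Rightarrow> 'a::field mat" where
  "P_mat d e xi = mat d d (\<lambda>(i,k). inv_into UNIV (e k) (xi ^ i))"

definition kappa_col :: "nat \<Rightarrow> (nat \<Rightarrow> 'a \<Rightarrow> 'a) \<Rightarrow> ('a \<Rightarrow> 'a) set \<Rightarrow> 'a::field vec" where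
  "kappa_col d e K = vec d (\<lambda>k. if e k \<in> K then 1 else 0)"

text \<open>Formal partial derivative of det of the group matrix [X_{s t^-1}] w.r.t. X_tau, evaluated
  at X_s := x s: the coefficient of T in det Gamma(x + T e_tau) (Taylor expansion).\<close>
definition ddet_group :: "nat \<Rightarrow> (nat \<Rightarrow> 'a \<Rightarrow> 'a) \<Rightarrow> ('a \<Rightarrow> 'a) \<Rightarrow> (('a \<Rightarrow> 'a) \<Rightarrow> 'a) \<Rightarrow> 'a::field" where
  "ddet_group d e tau x = coeff (det (mat d d (\<lambda>(i,k).
       [: x (e i \<circ> inv_into UNIV (e k)) :] + (if e i \<circ> inv_into UNIV (e k) = tau then [:0, 1:] else 0)))) 1"

definition partial_xi :: "nat \<Rightarrow> (nat \<Rightarrow> 'a \<Rightarrow> 'a) \<Rightarrow> ('a \<Rightarrow> 'a) \<Rightarrow> 'a \<Rightarrow> 'a::field" where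
  "partial_xi d e tau xi = ddet_group d e tau (\<lambda>s. s xi) / of_nat d"

definition trace_on :: "('a \<Rightarrow> 'a) set \<Rightarrow> 'a \<Rightarrow> 'a::comm_monoid_add" where
  "trace_on H x = (\<Sum>h\<in>H. h x)"

definition root_perm :: "('a \<Rightarrow> 'a) set \<Rightarrow> 'a \<Rightarrow> ('a \<Rightarrow> 'a) \<Rightarrow> 'a \<Rightarrow> 'a" where
  "root_perm G xi s = (\<lambda>y. if y \<in> (\<lambda>r. r xi) ` G then s y else y)"

definition even_part :: "('a \<Rightarrow> 'a) set \<Rightarrow> 'a \<Rightarrow> ('a \<Rightarrow> 'a) set" where
  "even_part G xi = {s \<in> G. evenperm (root_perm G xi s)}"

end

theory Submission
  imports Defs
begin

text \<open>
  The group matrix \<open>\<Gamma>\<^sub>\<xi>\<close> is invertible by Dedekind's independence of characters, because the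
  conjugates of \<open>\<xi>\<close> span \<open>L\<close>. It is invariant under simultaneous right translation of its row
  and column indices, hence so is its inverse, which is therefore the group matrix of a function
  \<open>y\<close> on \<open>G\<close>; Jacobi's formula for the derivative of \<open>det\<close> then gives \<open>\<partial>\<^sub>u(\<xi>) = det \<Gamma>\<^sub>\<xi> \<cdot> y(u)\<close>.
  Expanding \<open>P \<Gamma>\<^sub>\<xi>\<^sup>-\<^sup>1 \<kappa>\<close> with this shows that the first \<open>d\<close> terms of \<open>a\<^sub>K\<close> are
  \<open>\<Sum>\<^sub>\<sigma> (\<sigma>\<xi>)\<^sup>i w\<^sub>\<sigma>\<close> with \<open>w\<close> independent of \<open>i\<close>; since every \<open>\<sigma>\<xi>\<close> is a root of \<open>F\<close>, this
  expression satisfies the recurrence, which gives the first formula for all \<open>i\<close>.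
  Applying \<open>\<sigma>\<close> to the entries of \<open>\<Gamma>\<^sub>\<xi>\<close> permutes its rows by left translation, so \<open>\<sigma>\<close> multiplies
  \<open>det \<Gamma>\<^sub>\<xi>\<close> by the sign of \<open>\<sigma>\<close> as a permutation of the roots and maps \<open>\<partial>\<^sub>u(\<xi>)\<close> to
  \<open>sgn(\<sigma>) \<partial>\<^sub>\<sigma>\<^sub>u(\<xi>)\<close>. The first formula is thus the signed trace
  \<open>\<Sum>\<^sub>\<sigma> sgn(\<sigma>) \<sigma>(\<xi>\<^sup>i \<Sum>\<^sub>\<tau>\<^sub>\<in>\<^sub>K \<partial>\<^sub>\<tau>(\<xi>))\<close>, which is \<open>Tr\<^sub>G\<close> when all signs are \<open>1\<close> and
  \<open>Tr\<^sub>G\<^sub>+ - \<delta> \<circ> Tr\<^sub>G\<^sub>+\<close> otherwise.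
\<close>

text \<open>Plain \<open>inv\<close> is taken by the group inverse syntax of HOL-Algebra.\<close>
abbreviation inv_fun :: "('a \<Rightarrow> 'b) \<Rightarrow> 'b \<Rightarrow> 'a" where
  "inv_fun f \<equiv> inv_into UNIV f"

lemma field_auts_field_hom:
  assumes "s \<in> field_auts" shows "field_hom s"
proof -
  from assms have s: "\<And>x y. s (x + y) = s x + s y" "\<And>x y. s (x * y) = s x * s y" "s 1 = 1"
    by (auto simp: field_auts_def)
  have "s 0 = 0" using s(1)[of 0 0] by simp
  then show ?thesis by unfold_locales (auto simp: s)
qed

lemma field_auts_of_rat:
  assumes "s \<in> field_auts" shows "s (of_rat q) = of_rat q"
proof -
  interpret field_hom s by (rule field_auts_field_hom[OF assms])
  obtain a b where q: "q = Rat.Fract a b" "b > 0" by (cases q) auto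
  have "of_rat q = (of_int a / of_int b :: 'a)" using q by (simp add: of_rat_rat)
  then show ?thesis by (simp add: hom_distribs)
qed

lemma field_auts_poly_of_rat:
  assumes "s \<in> field_auts"
  shows "s (poly (map_poly of_rat p) x) = poly (map_poly of_rat p) (s x)"
proof -
  interpret field_hom s by (rule field_auts_field_hom[OF assms])
  show ?thesis
    unfolding poly_altdef hom_sum hom_mult hom_power
    by (intro sum.cong) (simp_all add: coeff_map_poly field_auts_of_rat[OF assms])
qed

lemma id_in_field_auts: "id \<in> field_auts"
  by (simp add: field_auts_def)

lemma field_auts_comp: "s \<in> field_auts \<Longrightarrow> t \<in> field_auts \<Longrightarrow> s \<circ> t \<in> field_auts"
  by (auto simp: field_auts_def intro: bij_comp)

lemma field_auts_inv:
  assumes "s \<in> field_auts" shows "inv_fun s \<in> field_auts"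
proof -
  have b: "bij s" and s: "\<And>x y. s (x + y) = s x + s y" "\<And>x y. s (x * y) = s x * s y" "s 1 = 1"
    using assms by (auto simp: field_auts_def)
  have si: "s (inv_fun s x) = x" and inv_s: "inv_fun s (s x) = x" for x
    using b by (simp_all add: bij_is_surj bij_is_inj surj_f_inv_f)
  have "inv_fun s (x + y) = inv_fun s x + inv_fun s y" "inv_fun s (x * y) = inv_fun s x * inv_fun s y" for x y
    by (metis s(1) si inv_s, metis s(2) si inv_s)
  moreover have "inv_fun s 1 = 1" by (metis s(3) inv_s)
  ultimately show ?thesis using b by (simp add: field_auts_def bij_imp_bij_inv)
qed

lemma field_auts_inv_comp: "s \<in> field_auts \<Longrightarrow> inv_fun s \<circ> s = id"
  by (simp add: field_auts_def bij_def)

lemma field_auts_comp_inv: "s \<in> field_auts \<Longrightarrow> s \<circ> inv_fun s = id"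
  by (simp add: field_auts_def bij_def surj_iff)

lemma field_auts_inv_inv: "s \<in> field_auts \<Longrightarrow> inv_fun (inv_fun s) = s"
  by (simp add: field_auts_def inv_inv_eq)

lemma field_auts_inv_distrib:
  "s \<in> field_auts \<Longrightarrow> t \<in> field_auts \<Longrightarrow> inv_fun (s \<circ> t) = inv_fun t \<circ> inv_fun s"
  by (simp add: field_auts_def o_inv_distrib)

lemma bij_betw_field_auts_comp_left: "g \<in> field_auts \<Longrightarrow> bij_betw (\<lambda>s. g \<circ> s) field_auts field_auts"
  by (rule bij_betw_byWitness[of _ "\<lambda>s. inv_fun g \<circ> s"])
     (auto simp: o_assoc field_auts_inv_comp field_auts_comp_inv field_auts_comp field_auts_inv)

lemma bij_betw_field_auts_comp_right: "g \<in> field_auts \<Longrightarrow> bij_betw (\<lambda>s. s \<circ> g) field_auts field_auts"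
  by (rule bij_betw_byWitness[of _ "\<lambda>s. s \<circ> inv_fun g"])
     (auto simp: o_assoc[symmetric] field_auts_inv_comp field_auts_comp_inv field_auts_comp
        field_auts_inv)

lemma bij_betw_field_auts_inv: "bij_betw inv_fun field_auts field_auts"
  by (rule bij_betw_byWitness[of _ inv_fun]) (auto simp: field_auts_inv_inv field_auts_inv)

lemma sum_field_auts_translate_indicator:
  fixes u g :: "'a::field_char_0 \<Rightarrow> 'a"
  assumes "finite (field_auts :: ('a \<Rightarrow> 'a) set)" and u: "u \<in> field_auts" and g: "g \<in> field_auts"
  shows "(\<Sum>s\<in>field_auts. if s \<circ> inv_fun g = u then c else 0) = c"
proof -
  have "s \<circ> inv_fun g = u \<longleftrightarrow> s = u \<circ> g" for s
    using g by (auto simp: o_assoc[symmetric] field_auts_inv_comp field_auts_comp_inv)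
  then show ?thesis using assms(1) field_auts_comp[OF u g] by simp
qed

lemma field_auts_linearly_independent:
  assumes "finite S" "S \<subseteq> field_auts"
    and "\<forall>x::'a::field_char_0. (\<Sum>s\<in>S. w s * s x) = 0"
  shows "\<forall>s\<in>S. w s = 0"
  using assms
proof (induction "card S" arbitrary: S w rule: less_induct)
  case less
  show ?case
  proof (rule ccontr)
    assume "\<not> (\<forall>s\<in>S. w s = 0)"
    then obtain s1 where s1: "s1 \<in> S" "w s1 \<noteq> 0" by auto
    show False
    proof (cases "\<exists>s2\<in>S. s2 \<noteq> s1 \<and> w s2 \<noteq> 0")
      case False
      have "(\<Sum>s\<in>S. w s * s 1) = w s1 * s1 1 + (\<Sum>s\<in>S-{s1}. w s * s 1)"
        using s1 less.prems(1) by (simp add: sum.remove)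
      also have "(\<Sum>s\<in>S-{s1}. w s * s 1) = 0" using False by (intro sum.neutral) auto
      finally have "w s1 = 0"
        using less.prems(2,3) s1(1) by (auto simp: field_auts_def)
      with s1 show False by simp
    next
      case True
      then obtain s2 where s2: "s2 \<in> S" "s2 \<noteq> s1" "w s2 \<noteq> 0" by auto
      then obtain y where y: "s1 y \<noteq> s2 y" by (metis ext)
      define w' where "w' = (\<lambda>s. w s * (s y - s1 y))"
      have mult: "s (y * x) = s y * s x" if "s \<in> S" for s x
        using that less.prems(2) by (auto simp: field_auts_def)
      \<comment> \<open>\<open>w'\<close> is the relation for \<open>x \<mapsto> y x\<close> minus \<open>s1 y\<close> times the relation for \<open>x\<close>;
        it vanishes at \<open>s1\<close>, so it is a shorter relation.\<close>
      have "(\<Sum>s\<in>S. w' s * s x) = (\<Sum>s\<in>S. w s * s (y * x)) - s1 y * (\<Sum>s\<in>S. w s * s x)" for x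
        unfolding sum_distrib_left sum_subtractf[symmetric]
        by (intro sum.cong refl) (simp only: mult, simp add: w'_def algebra_simps)
      then have "(\<Sum>s\<in>S. w' s * s x) = 0" for x using less.prems(3) by simp
      then have rel: "\<forall>x. (\<Sum>s\<in>S-{s1}. w' s * s x) = 0"
        using s1 less.prems(1) by (simp add: sum.remove w'_def)
      have "card (S - {s1}) < card S" using s1 less.prems(1) by (meson card_Diff1_less)
      from less.hyps[OF this _ _ rel] less.prems have "\<forall>s\<in>S-{s1}. w' s = 0" by auto
      with s2 y show False by (auto simp: w'_def)
    qed
  qed
qed

definition conj_class :: "('a::field_char_0 \<Rightarrow> 'a) \<Rightarrow> ('a \<Rightarrow> 'a) set" where
  "conj_class t = {r \<circ> t \<circ> inv_fun r | r. r \<in> field_auts}"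

lemma conj_class_subset: "t \<in> field_auts \<Longrightarrow> conj_class t \<subseteq> field_auts"
  by (auto simp: conj_class_def intro!: field_auts_comp field_auts_inv)

lemma conj_class_conj:
  assumes s: "s \<in> field_auts" and u: "u \<in> conj_class t"
  shows "s \<circ> u \<circ> inv_fun s \<in> conj_class t"
proof -
  obtain r where r: "r \<in> field_auts" "u = r \<circ> t \<circ> inv_fun r" using u by (auto simp: conj_class_def)
  then have "s \<circ> u \<circ> inv_fun s = (s \<circ> r) \<circ> t \<circ> inv_fun (s \<circ> r)"
    using s by (simp add: field_auts_inv_distrib o_assoc)
  then show ?thesis using field_auts_comp[OF s r(1)] by (auto simp: conj_class_def)
qed

lemma sum_conj_class_comp_commute:
  assumes s: "s \<in> field_auts"
  shows "(\<Sum>u\<in>conj_class t. f (u \<circ> s)) = (\<Sum>u\<in>conj_class t. f (s \<circ> u))"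
proof -
  have s': "inv_fun s \<in> field_auts" and ss: "inv_fun (inv_fun s) = s"
    using s by (simp_all add: field_auts_inv field_auts_inv_inv)
  have cancel_right: "u \<circ> s \<circ> inv_fun s = u" "u \<circ> inv_fun s \<circ> s = u" for u
    using s by (simp_all add: o_assoc[symmetric] field_auts_inv_comp field_auts_comp_inv)
  show ?thesis
    by (rule sum.reindex_bij_witness[of _ "\<lambda>u. s \<circ> u \<circ> inv_fun s" "\<lambda>u. inv_fun s \<circ> u \<circ> s"])
       (auto simp: o_assoc field_auts_comp_inv[OF s] field_auts_inv_comp[OF s] cancel_right intro: conj_class_conj[OF s] conj_class_conj[OF s', unfolded ss])
qed

lemma mat_right_inverse_unique:
  fixes A B B' :: "'a::field mat"
  assumes "A \<in> carrier_mat n n" "B \<in> carrier_mat n n" "B' \<in> carrier_mat n n"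
    and "B * A = 1\<^sub>m n" "A * B' = 1\<^sub>m n"
  shows "B' = B"
proof -
  have "B' = (B * A) * B'" by (metis assms(3,4) left_mult_one_mat)
  also have "\<dots> = B * (A * B')" by (rule assoc_mult_mat[OF assms(2,1,3)])
  also have "\<dots> = B" by (metis assms(2,5) right_mult_one_mat)
  finally show ?thesis .
qed

lemma inverse_mat_permute_rows:
  fixes A B A' :: "'a::field mat"
  assumes A: "A \<in> carrier_mat n n" and B: "B \<in> carrier_mat n n" and AB: "A * B = 1\<^sub>m n"
    and A': "A' \<in> carrier_mat n n" and p: "bij_betw p {0..<n} {0..<n}"
    and rows: "\<And>i k. i < n \<Longrightarrow> k < n \<Longrightarrow> A' $$ (i, k) = A $$ (p i, k)"
  shows "A' * mat n n (\<lambda>(k,j). B $$ (k, p j)) = 1\<^sub>m n"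
proof (rule eq_matI)
  have p_less: "j < n \<Longrightarrow> p j < n" for j using p by (auto simp: bij_betw_def)
  have p_eq_iff: "j < n \<Longrightarrow> l < n \<Longrightarrow> p j = p l \<longleftrightarrow> j = l" for j l
    using p by (auto simp: bij_betw_def inj_on_def)
  fix i k assume "i < dim_row (1\<^sub>m n :: 'a mat)" "k < dim_col (1\<^sub>m n :: 'a mat)"
  then have ik: "i < n" "k < n" by auto
  have "(A' * mat n n (\<lambda>(k,j). B $$ (k, p j))) $$ (i,k) = (A * B) $$ (p i, p k)"
    using A A' B ik p_less by (simp add: scalar_prod_def rows)
  also have "\<dots> = 1\<^sub>m n $$ (i, k)" using AB ik p_less p_eq_iff by simp
  finally show "(A' * mat n n (\<lambda>(k,j). B $$ (k, p j))) $$ (i,k) = 1\<^sub>m n $$ (i, k)" .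
qed (use A' in auto)

lemma inverse_mat_simultaneous_perm_invariant:
  fixes A B :: "'a::field mat"
  assumes A: "A \<in> carrier_mat n n" and B: "B \<in> carrier_mat n n"
    and AB: "A * B = 1\<^sub>m n" and BA: "B * A = 1\<^sub>m n"
    and p: "bij_betw p {0..<n} {0..<n}"
    and inv: "\<And>i k. i < n \<Longrightarrow> k < n \<Longrightarrow> A $$ (p i, p k) = A $$ (i, k)"
    and i: "i < n" and k: "k < n"
  shows "B $$ (p i, p k) = B $$ (i, k)"
proof -
  have p_less: "j < n \<Longrightarrow> p j < n" for j using p by (auto simp: bij_betw_def)
  have p_eq_iff: "j < n \<Longrightarrow> l < n \<Longrightarrow> p j = p l \<longleftrightarrow> j = l" for j l
    using p by (auto simp: bij_betw_def inj_on_def)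
  define B' where "B' = mat n n (\<lambda>(i,k). B $$ (p i, p k))"
  have B': "B' \<in> carrier_mat n n" by (simp add: B'_def)
  have "A * B' = 1\<^sub>m n"
  proof (rule eq_matI)
    fix i k assume "i < dim_row (1\<^sub>m n :: 'a mat)" "k < dim_col (1\<^sub>m n :: 'a mat)"
    then have ik: "i < n" "k < n" by auto
    have "(A * B') $$ (i,k) = (\<Sum>j = 0..<n. A $$ (p i, p j) * B $$ (p j, p k))"
      using A ik inv by (simp add: B'_def scalar_prod_def)
    also have "\<dots> = (\<Sum>j = 0..<n. A $$ (p i, j) * B $$ (j, p k))"
      using sum.reindex_bij_betw[OF p, of "\<lambda>j. A $$ (p i, j) * B $$ (j, p k)"] by simp
    also have "\<dots> = (A * B) $$ (p i, p k)"
      using A B ik p_less by (simp add: scalar_prod_def)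
    also have "\<dots> = 1\<^sub>m n $$ (i, k)" using AB ik p_less p_eq_iff by simp
    finally show "(A * B') $$ (i,k) = 1\<^sub>m n $$ (i, k)" .
  qed (use A B' in auto)
  then have "B' = B" by (rule mat_right_inverse_unique[OF A B B' BA])
  then show ?thesis using i k by (metis B'_def index_mat(1) case_prod_conv)
qed


lemma coeff_prod_linear_factors:
  assumes "finite S"
  shows "coeff (\<Prod>i\<in>S. [:1, c i:]) 0 = (1::'a::comm_ring_1)"
    and "coeff (\<Prod>i\<in>S. [:1, c i:]) 1 = (\<Sum>i\<in>S. c i)"
  using assms by (induction S rule: finite_induct) (auto simp: coeff_pCons split: nat.splits)

text \<open>The linear coefficient of \<open>det (1 + X N)\<close> is the trace of \<open>N\<close>: every non-identity
  permutation picks at least two off-diagonal entries, each divisible by \<open>X\<close>.\<close>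

lemma coeff_det_one_plus_X:
  fixes N :: "'a::field mat"
  assumes N: "N \<in> carrier_mat n n"
  shows "coeff (det (mat n n (\<lambda>(i,k). [:(if i = k then 1 else 0), N $$ (i,k):]))) 1
    = (\<Sum>i = 0..<n. N $$ (i,i))"
proof -
  define Q where "Q = mat n n (\<lambda>(i,k). [:(if i = k then 1 else 0), N $$ (i,k):])"
  have Q: "Q \<in> carrier_mat n n" by (simp add: Q_def)
  let ?P = "{p. p permutes {0..<n}}"
  define f where "f = (\<lambda>p. coeff (signof p * (\<Prod>i = 0..<n. Q $$ (i, p i))) 1)"
  have "coeff (det Q) 1 = (\<Sum>p\<in>?P. f p)"
    unfolding det_def'[OF Q] f_def by (simp add: coeff_sum)
  also have "\<dots> = f id + (\<Sum>p\<in>?P - {id}. f p)"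
    by (simp add: finite_permutations sum.remove permutes_id)
  also have "(\<Sum>p\<in>?P - {id}. f p) = 0"
  proof (rule sum.neutral, rule ballI)
    fix p assume p: "p \<in> ?P - {id}"
    then have pp: "p permutes {0..<n}" by simp
    from p obtain i where i: "p i \<noteq> i" by (metis DiffE eq_id_iff singletonI)
    define j where "j = p i"
    have iS: "i \<in> {0..<n}" using pp i by (meson permutes_not_in)
    have jS: "j \<in> {0..<n}" using pp iS by (simp add: j_def permutes_in_image)
    have ji: "j \<noteq> i" using i by (simp add: j_def)
    have pj: "p j \<noteq> j" using i pp by (metis j_def permutes_inj injD)
    have "(\<Prod>k = 0..<n. Q $$ (k, p k))
        = Q $$ (i, p i) * (Q $$ (j, p j) * (\<Prod>k\<in>{0..<n} - {i} - {j}. Q $$ (k, p k)))"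
      using iS jS ji by (simp add: prod.remove[of "{0..<n}" i] prod.remove[of "{0..<n} - {i}" j])
    also have "Q $$ (i, p i) = pCons 0 [:N $$ (i, p i):]"
      using iS i pp by (simp add: Q_def permutes_in_image)
    also have "Q $$ (j, p j) = pCons 0 [:N $$ (j, p j):]"
      using jS pj pp by (simp add: Q_def permutes_in_image)
    finally show "f p = 0" unfolding f_def of_int_poly by simp
  qed
  also have "f id = (\<Sum>i = 0..<n. N $$ (i,i))"
  proof -
    have "(\<Prod>i = 0..<n. Q $$ (i, id i)) = (\<Prod>i = 0..<n. [:1, N $$ (i,i):])"
      by (intro prod.cong refl) (simp add: Q_def)
    then show ?thesis unfolding f_def
      using coeff_prod_linear_factors(2)[of "{0..<n}" "\<lambda>i. N $$ (i,i)"] by simp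
  qed
  finally show ?thesis by (simp add: Q_def)
qed

lemma sum_pCons_linear:
  "finite S \<Longrightarrow> (\<Sum>j\<in>S. [:f j, g j:]) = [:(\<Sum>j\<in>S. f j), (\<Sum>j\<in>S. g j):]"
  by (induction S rule: finite_induct) auto

text \<open>Jacobi's formula: the derivative of \<open>det\<close> at \<open>A\<close> in direction \<open>E\<close> is
  \<open>det A \<cdot> tr (A\<^sup>-\<^sup>1 E)\<close>. It follows from \<open>A + X E = A (1 + X A\<^sup>-\<^sup>1 E)\<close>.\<close>

lemma coeff_det_linear_pencil:
  fixes A B E :: "'a::field mat"
  assumes A: "A \<in> carrier_mat n n" and B: "B \<in> carrier_mat n n" and AB: "A * B = 1\<^sub>m n"
    and E: "E \<in> carrier_mat n n"
  shows "coeff (det (mat n n (\<lambda>(i,k). [:A $$ (i,k), E $$ (i,k):]))) 1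
    = det A * (\<Sum>i = 0..<n. (B * E) $$ (i,i))"
proof -
  interpret const_poly: comm_ring_hom "\<lambda>x::'a. [:x:]"
    by unfold_locales (auto simp: one_pCons)
  define N where "N = B * E"
  have N: "N \<in> carrier_mat n n" using B E by (simp add: N_def)
  have AN: "A * N = E"
    unfolding N_def using assoc_mult_mat[OF A B E, symmetric] AB E by simp
  define Q where "Q = mat n n (\<lambda>(i,k). [:(if i = k then 1 else 0), N $$ (i,k):])"
  have Q: "Q \<in> carrier_mat n n" by (simp add: Q_def)
  have "mat n n (\<lambda>(i,k). [:A $$ (i,k), E $$ (i,k):]) = map_mat (\<lambda>x. [:x:]) A * Q"
  proof (rule eq_matI)
    fix i k assume "i < dim_row (map_mat (\<lambda>x. [:x:]) A * Q)" "k < dim_col (map_mat (\<lambda>x. [:x:]) A * Q)"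
    then have ik: "i < n" "k < n" using A Q by auto
    have "(map_mat (\<lambda>x. [:x:]) A * Q) $$ (i,k)
        = (\<Sum>j = 0..<n. [:A $$ (i,j) * (if j = k then 1 else 0), A $$ (i,j) * N $$ (j,k):])"
      using ik A Q by (simp add: scalar_prod_def Q_def mult.commute)
    also have "\<dots> = [:(\<Sum>j = 0..<n. A $$ (i,j) * (if j = k then 1 else 0)), (A * N) $$ (i,k):]"
      using ik A N by (simp add: sum_pCons_linear scalar_prod_def)
    also have "\<dots> = [:A $$ (i,k), E $$ (i,k):]"
      using ik by (simp add: AN if_distrib sum.delta' cong: if_cong)
    finally show "mat n n (\<lambda>(i,k). [:A $$ (i,k), E $$ (i,k):]) $$ (i,k)
      = (map_mat (\<lambda>x. [:x:]) A * Q) $$ (i,k)" using ik by simp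
  qed (use A Q in auto)
  then have "coeff (det (mat n n (\<lambda>(i,k). [:A $$ (i,k), E $$ (i,k):]))) 1
      = coeff ([:det A:] * det Q) 1"
    using det_mult[OF map_carrier_mat[THEN iffD2, OF A] Q] by simp
  also have "\<dots> = det A * (\<Sum>i = 0..<n. N $$ (i,i))"
    unfolding Q_def using coeff_det_one_plus_X[OF N] by simp
  finally show ?thesis by (simp add: N_def)
qed

section \<open>Linear recurrences\<close>

lemma monic_root_power_degree:
  fixes F :: "int poly" and x :: "'a::comm_ring_1"
  assumes monic: "lead_coeff F = 1" and root: "poly (map_poly of_int F) x = 0"
  shows "x ^ degree F = - (\<Sum>k<degree F. of_int (coeff F k) * x ^ k)"
proof -
  have "degree (map_poly (of_int :: int \<Rightarrow> 'a) F) = degree F"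
    using monic by (subst map_poly_degree_eq) auto
  then have "0 = (\<Sum>k\<le>degree F. of_int (coeff F k) * x ^ k)"
    using root unfolding poly_altdef by (simp add: coeff_map_poly)
  also have "\<dots> = (\<Sum>k<degree F. of_int (coeff F k) * x ^ k) + x ^ degree F"
    using monic by (simp add: lessThan_Suc_atMost[symmetric])
  finally show ?thesis by (simp add: eq_neg_iff_add_eq_0 add.commute)
qed

lemma sum_powers_linear_recurrence:
  fixes r W :: "'b \<Rightarrow> 'a::comm_ring_1"
  assumes roots: "\<And>s. s \<in> S \<Longrightarrow> r s ^ d = - (\<Sum>k<d. c k * r s ^ k)"
  shows "(\<Sum>s\<in>S. r s ^ (n + d) * W s) = - (\<Sum>k<d. c k * (\<Sum>s\<in>S. r s ^ (n + k) * W s))"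
proof -
  have "r s ^ (n + d) * W s = - (\<Sum>k<d. c k * (r s ^ (n + k) * W s))" if "s \<in> S" for s
  proof -
    have "r s ^ (n + d) * W s = r s ^ n * W s * r s ^ d" by (simp add: power_add algebra_simps)
    also have "\<dots> = - (\<Sum>k<d. c k * (r s ^ (n + k) * W s))"
      by (simp add: roots[OF that] sum_distrib_left power_add algebra_simps)
    finally show ?thesis .
  qed
  then show ?thesis
    by (simp add: sum_negf sum_distrib_left sum.swap[of _ S])
qed

lemma linear_recurrence_eqI:
  fixes a b :: "nat \<Rightarrow> 'a::comm_ring_1"
  assumes init: "\<And>i. i < d \<Longrightarrow> a i = b i"
    and rec_a: "\<And>n. a (n + d) = - (\<Sum>k<d. c k * a (n + k))"
    and rec_b: "\<And>n. b (n + d) = - (\<Sum>k<d. c k * b (n + k))"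
  shows "a i = b i"
proof (induction i rule: less_induct)
  case (less i)
  show ?case
  proof (cases "i < d")
    case False
    then obtain n where i: "i = n + d" by (metis add.commute le_iff_add not_less)
    have "a (n + k) = b (n + k)" if "k < d" for k using less.IH that i by simp
    then show ?thesis using rec_a[of n] rec_b[of n] i by simp
  qed (rule init)
qed

section \<open>The group matrix of a normal basis element\<close>

locale enumerated_normal_basis =
  fixes d :: nat and e :: "nat \<Rightarrow> 'a::field_char_0 \<Rightarrow> 'a" and xi :: 'a
  assumes enum: "bij_betw e {..<d} field_auts"
    and normal_basis_span: "\<forall>x. \<exists>c::('a \<Rightarrow> 'a) \<Rightarrow> rat. x = (\<Sum>s\<in>field_auts. of_rat (c s) * s xi)"
    and generator: "\<forall>x::'a. \<exists>p::rat poly. x = poly (map_poly of_rat p) xi"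
begin

abbreviation G :: "('a \<Rightarrow> 'a) set" where "G \<equiv> field_auts"
abbreviation \<Gamma> :: "'a mat" where "\<Gamma> \<equiv> Gamma_xi d e xi"

definition idx :: "('a \<Rightarrow> 'a) \<Rightarrow> nat" where "idx = the_inv_into {..<d} e"

lemma finite_G: "finite G"
  using enum bij_betw_finite by blast

lemma enum_in_G: "i < d \<Longrightarrow> e i \<in> G"
  using enum by (auto simp: bij_betw_def)

lemma idx_less: "s \<in> G \<Longrightarrow> idx s < d"
  unfolding idx_def using enum by (metis bij_betw_def lessThan_iff the_inv_into_into subset_refl)

lemma enum_idx: "s \<in> G \<Longrightarrow> e (idx s) = s"
  unfolding idx_def using enum by (metis bij_betw_def f_the_inv_into_f)

lemma idx_enum: "i < d \<Longrightarrow> idx (e i) = i"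
  unfolding idx_def using enum by (metis bij_betw_def lessThan_iff the_inv_into_f_f)

lemma bij_betw_enum: "bij_betw e {0..<d} G"
  using enum by (simp add: atLeast0LessThan)

lemma bij_betw_idx: "bij_betw idx G {0..<d}"
  using bij_betw_the_inv_into[OF enum] by (simp add: idx_def atLeast0LessThan)

lemma sum_enum: "(\<Sum>i = 0..<d. f (e i)) = (\<Sum>s\<in>G. f s)"
  using sum.reindex_bij_betw[OF bij_betw_enum] .

lemma d_pos: "0 < d"
  using enum id_in_field_auts by (auto simp: bij_betw_def)

lemma Gamma_carrier: "\<Gamma> \<in> carrier_mat d d"
  by (simp add: Gamma_xi_def)

lemma Gamma_entry: "i < d \<Longrightarrow> k < d \<Longrightarrow> \<Gamma> $$ (i,k) = (e i \<circ> inv_fun (e k)) xi"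
  by (simp add: Gamma_xi_def)

lemma normal_basis_relation_extends:
  assumes rel: "\<And>t. t \<in> G \<Longrightarrow> (\<Sum>s\<in>G. w s * s (t xi)) = 0"
  shows "(\<Sum>s\<in>G. w s * s x) = 0"
proof -
  obtain c where c: "x = (\<Sum>t\<in>G. of_rat (c t) * t xi)" using normal_basis_span by blast
  have "w s * s x = (\<Sum>t\<in>G. of_rat (c t) * (w s * s (t xi)))" if s: "s \<in> G" for s
  proof -
    interpret field_hom s by (rule field_auts_field_hom[OF s])
    show ?thesis
      by (simp add: c hom_distribs field_auts_of_rat[OF s] sum_distrib_left mult.left_commute)
  qed
  then have "(\<Sum>s\<in>G. w s * s x) = (\<Sum>s\<in>G. \<Sum>t\<in>G. of_rat (c t) * (w s * s (t xi)))"
    by simp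
  also have "\<dots> = (\<Sum>t\<in>G. of_rat (c t) * (\<Sum>s\<in>G. w s * s (t xi)))"
    by (subst sum.swap) (simp add: sum_distrib_left)
  also have "\<dots> = 0" using rel by simp
  finally show ?thesis .
qed

text \<open>A kernel vector of \<open>\<Gamma>\<^sup>T\<close> would be a linear relation among the automorphisms.\<close>

lemma det_Gamma_nonzero: "det \<Gamma> \<noteq> 0"
proof
  assume "det \<Gamma> = 0"
  then obtain v where v: "v \<in> carrier_vec d" "v \<noteq> 0\<^sub>v d" "transpose_mat \<Gamma> *\<^sub>v v = 0\<^sub>v d"
    using det_0_iff_vec_prod_zero_field[of "transpose_mat \<Gamma>"] det_transpose[OF Gamma_carrier]
      Gamma_carrier by auto
  define w where "w s = v $ idx s" for s
  have "(\<Sum>s\<in>G. w s * s (t xi)) = 0" if t: "t \<in> G" for t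
  proof -
    define k where "k = idx (inv_fun t)"
    have k: "k < d" "e k = inv_fun t"
      using idx_less enum_idx field_auts_inv[OF t] by (auto simp: k_def)
    have "0 = (transpose_mat \<Gamma> *\<^sub>v v) $ k" using v k by simp
    also have "\<dots> = (\<Sum>i = 0..<d. \<Gamma> $$ (i,k) * v $ i)"
      using v(1) k Gamma_carrier by (simp add: scalar_prod_def)
    also have "\<dots> = (\<Sum>i = 0..<d. w (e i) * e i (t xi))"
      using k t by (intro sum.cong refl) (simp add: Gamma_entry w_def idx_enum field_auts_inv_inv)
    finally show ?thesis using sum_enum[of "\<lambda>s. w s * s (t xi)"] by simp
  qed
  then have "\<forall>x. (\<Sum>s\<in>G. w s * s x) = 0"
    using normal_basis_relation_extends by blast
  then have "\<forall>s\<in>G. w s = 0"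
    by (rule field_auts_linearly_independent[OF finite_G subset_refl])
  then have "v $ i = 0" if "i < d" for i
    using that enum_in_G[OF that] by (auto simp: w_def idx_enum)
  then have "v = 0\<^sub>v d" using v(1) by (intro eq_vecI) auto
  with v(2) show False by simp
qed

definition Gamma_inv :: "'a mat" where "Gamma_inv = the (mat_inverse \<Gamma>)"

lemma Gamma_inv: "\<Gamma> * Gamma_inv = 1\<^sub>m d" "Gamma_inv * \<Gamma> = 1\<^sub>m d" "Gamma_inv \<in> carrier_mat d d"
proof -
  have "\<Gamma> \<in> Units (ring_mat TYPE('a) d undefined)"
    by (rule det_non_zero_imp_unit[OF Gamma_carrier det_Gamma_nonzero])
  then obtain C where "mat_inverse \<Gamma> = Some C"
    using mat_inverse(1)[OF Gamma_carrier] by fastforce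
  then show "\<Gamma> * Gamma_inv = 1\<^sub>m d" "Gamma_inv * \<Gamma> = 1\<^sub>m d" "Gamma_inv \<in> carrier_mat d d"
    using mat_inverse(2)[OF Gamma_carrier] by (auto simp: Gamma_inv_def)
qed

definition gamma_inv_fun :: "('a \<Rightarrow> 'a) \<Rightarrow> 'a" where
  "gamma_inv_fun u = Gamma_inv $$ (idx id, idx u)"

text \<open>\<open>\<Gamma>\<close> is invariant under right translation of row and column indices by \<open>g\<close>;
  taking \<open>g = e\<^sub>j\<^sup>-\<^sup>1\<close> moves row \<open>j\<close> of the inverse to the row of the identity.\<close>

lemma Gamma_inv_group_matrix:
  assumes j: "j < d" and k: "k < d"
  shows "Gamma_inv $$ (j,k) = gamma_inv_fun (e k \<circ> inv_fun (e j))"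
proof -
  define g where "g = inv_fun (e j)"
  have g: "g \<in> G" using field_auts_inv[OF enum_in_G[OF j]] by (simp add: g_def)
  define p where "p = (\<lambda>i. idx (e i \<circ> g))"
  have p: "bij_betw p {0..<d} {0..<d}"
    using bij_betw_trans[OF bij_betw_trans[OF bij_betw_enum bij_betw_field_auts_comp_right[OF g]]
        bij_betw_idx]
    by (simp add: p_def o_def)
  have "\<Gamma> $$ (p i, p k) = \<Gamma> $$ (i, k)" if "i < d" "k < d" for i k
  proof -
    have "e i \<circ> g \<in> G" "e k \<circ> g \<in> G" using that g enum_in_G field_auts_comp by auto
    then have "\<Gamma> $$ (p i, p k) = (e i \<circ> (g \<circ> inv_fun g) \<circ> inv_fun (e k)) xi"
      using g enum_in_G[OF that(2)]
      by (simp add: p_def Gamma_entry idx_less enum_idx field_auts_inv_distrib o_assoc)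
    also have "\<dots> = \<Gamma> $$ (i,k)" using that g by (simp add: field_auts_comp_inv Gamma_entry)
    finally show ?thesis .
  qed
  then have "Gamma_inv $$ (p j, p k) = Gamma_inv $$ (j, k)"
    using inverse_mat_simultaneous_perm_invariant[OF Gamma_carrier Gamma_inv(3,1,2) p] j k
    by blast
  moreover have "p j = idx id" using j by (simp add: p_def g_def field_auts_comp_inv enum_in_G)
  ultimately show ?thesis by (simp add: p_def g_def gamma_inv_fun_def)
qed


lemma partial_xi_eq:
  assumes u: "u \<in> G"
  shows "partial_xi d e u xi = det \<Gamma> * gamma_inv_fun u"
proof -
  define E where "E = mat d d (\<lambda>(i,k). if e i \<circ> inv_fun (e k) = u then 1 else (0::'a))"
  have E: "E \<in> carrier_mat d d" by (simp add: E_def)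
  have diagonal: "(Gamma_inv * E) $$ (i,i) = gamma_inv_fun u" if i: "i < d" for i
  proof -
    have "(Gamma_inv * E) $$ (i,i)
        = (\<Sum>k = 0..<d. if e k \<circ> inv_fun (e i) = u then gamma_inv_fun u else 0)"
      using Gamma_inv(3) E i
      by (auto simp: scalar_prod_def E_def Gamma_inv_group_matrix intro!: sum.cong)
    also have "\<dots> = gamma_inv_fun u"
      using sum_enum[of "\<lambda>s. if s \<circ> inv_fun (e i) = u then gamma_inv_fun u else 0"]
        sum_field_auts_translate_indicator[OF finite_G u enum_in_G[OF i]] by simp
    finally show ?thesis .
  qed
  have "mat d d (\<lambda>(i,k). [:(e i \<circ> inv_fun (e k)) xi:]
        + (if e i \<circ> inv_fun (e k) = u then [:0, 1:] else 0))
      = mat d d (\<lambda>(i,k). [:\<Gamma> $$ (i,k), E $$ (i,k):])"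
    by (rule eq_matI) (auto simp: Gamma_entry E_def)
  then have "ddet_group d e u (\<lambda>s. s xi)
      = coeff (det (mat d d (\<lambda>(i,k). [:\<Gamma> $$ (i,k), E $$ (i,k):]))) 1"
    by (simp add: ddet_group_def)
  also have "\<dots> = det \<Gamma> * (\<Sum>i = 0..<d. (Gamma_inv * E) $$ (i,i))"
    by (rule coeff_det_linear_pencil[OF Gamma_carrier Gamma_inv(3,1) E])
  also have "\<dots> = det \<Gamma> * of_nat d * gamma_inv_fun u" using diagonal by simp
  finally show ?thesis using d_pos by (simp add: partial_xi_def)
qed


lemma initial_terms:
  assumes t: "t \<in> G" and i: "i < d"
  shows "(P_mat d e xi * Gamma_inv *\<^sub>v kappa_col d e (conj_class t)) $ i
    = (\<Sum>s\<in>G. \<Sum>u\<in>conj_class t. s (xi ^ i) * partial_xi d e (s \<circ> u) xi) / det \<Gamma>"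
proof -
  let ?K = "conj_class t"
  let ?y = gamma_inv_fun
  have K: "?K \<subseteq> G" by (rule conj_class_subset[OF t])
  have "(P_mat d e xi * Gamma_inv *\<^sub>v kappa_col d e ?K) $ i
      = (\<Sum>k = 0..<d. (\<Sum>j = 0..<d. inv_fun (e j) (xi ^ i) * ?y (e k \<circ> inv_fun (e j)))
          * (if e k \<in> ?K then 1 else 0))"
    using i Gamma_inv(3)
    by (simp add: P_mat_def kappa_col_def scalar_prod_def Gamma_inv_group_matrix)
  also have "\<dots> = (\<Sum>v\<in>G. (\<Sum>r\<in>G. inv_fun r (xi ^ i) * ?y (v \<circ> inv_fun r))
      * (if v \<in> ?K then 1 else 0))"
    by (simp add: sum_enum[of "\<lambda>r. inv_fun r (xi ^ i) * ?y (_ \<circ> inv_fun r)"]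
        sum_enum[of "\<lambda>v. (\<Sum>r\<in>G. inv_fun r (xi ^ i) * ?y (v \<circ> inv_fun r))
          * (if v \<in> ?K then 1 else 0)"])
  also have "\<dots> = (\<Sum>v\<in>?K. \<Sum>r\<in>G. inv_fun r (xi ^ i) * ?y (v \<circ> inv_fun r))"
    by (rule sum.mono_neutral_cong_right[OF finite_G K]) auto
  also have "\<dots> = (\<Sum>v\<in>?K. \<Sum>s\<in>G. s (xi ^ i) * ?y (v \<circ> s))"
    using sum.reindex_bij_betw[OF bij_betw_field_auts_inv, of "\<lambda>s. s (xi ^ i) * ?y (_ \<circ> s)"]
    by (simp add: field_auts_inv_inv)
  also have "\<dots> = (\<Sum>s\<in>G. \<Sum>v\<in>?K. s (xi ^ i) * ?y (v \<circ> s))"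
    by (rule sum.swap)
  also have "\<dots> = (\<Sum>s\<in>G. \<Sum>u\<in>?K. s (xi ^ i) * ?y (s \<circ> u))"
    by (intro sum.cong refl sum_conj_class_comp_commute)
  also have "\<dots> = (\<Sum>s\<in>G. \<Sum>u\<in>?K. s (xi ^ i) * partial_xi d e (s \<circ> u) xi) / det \<Gamma>"
    using K det_Gamma_nonzero
    by (auto simp: sum_divide_distrib partial_xi_eq field_auts_comp intro!: sum.cong)
  finally show ?thesis .
qed

section \<open>The Galois action on the group matrix\<close>

lemma aut_eq_if_eq_at_xi:
  assumes "r \<in> G" "r' \<in> G" "r xi = r' xi"
  shows "r = r'"
proof
  fix x
  obtain p where "x = poly (map_poly of_rat p) xi" using generator by blast
  then show "r x = r' x" using assms by (simp add: field_auts_poly_of_rat)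
qed

lemma inj_on_conjugates: "inj_on (\<lambda>i. e i xi) {0..<d}"
  by (rule inj_onI) (metis aut_eq_if_eq_at_xi atLeastLessThan_iff enum_in_G idx_enum)

definition left_perm :: "('a \<Rightarrow> 'a) \<Rightarrow> nat \<Rightarrow> nat" where
  "left_perm s i = (if i < d then idx (s \<circ> e i) else i)"

lemma left_perm_permutes:
  assumes s: "s \<in> G" shows "left_perm s permutes {0..<d}"
proof (rule bij_imp_permutes)
  have "bij_betw (\<lambda>i. idx (s \<circ> e i)) {0..<d} {0..<d}"
    using bij_betw_trans[OF bij_betw_trans[OF bij_betw_enum bij_betw_field_auts_comp_left[OF s]]
        bij_betw_idx]
    by (simp add: o_def)
  then show "bij_betw (left_perm s) {0..<d} {0..<d}"
    by (rule bij_betw_cong[THEN iffD1, rotated]) (simp add: left_perm_def)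
qed (simp add: left_perm_def)

lemma left_perm_less: "s \<in> G \<Longrightarrow> i < d \<Longrightarrow> left_perm s i < d"
  by (simp add: left_perm_def idx_less field_auts_comp enum_in_G)

lemma enum_left_perm: "s \<in> G \<Longrightarrow> i < d \<Longrightarrow> e (left_perm s i) = s \<circ> e i"
  by (simp add: left_perm_def enum_idx field_auts_comp enum_in_G)

lemma root_perm_eq_map_permutation:
  assumes s: "s \<in> G"
  shows "root_perm G xi s = map_permutation {0..<d} (\<lambda>i. e i xi) (left_perm s)"
proof
  fix z
  have roots: "(\<lambda>i. e i xi) ` {0..<d} = (\<lambda>r. r xi) ` G"
    using bij_betw_imp_surj_on[OF bij_betw_enum] image_image[of "\<lambda>r. r xi" e "{0..<d}"] by simp
  show "root_perm G xi s z = map_permutation {0..<d} (\<lambda>i. e i xi) (left_perm s) z"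
  proof (cases "z \<in> (\<lambda>r. r xi) ` G")
    case True
    then obtain i where i: "i < d" "z = e i xi" unfolding roots[symmetric] by auto
    have "map_permutation {0..<d} (\<lambda>i. e i xi) (left_perm s) (e i xi) = e (left_perm s i) xi"
      by (rule map_permutation_apply[OF inj_on_conjugates]) (use i in simp)
    then show ?thesis using True i by (simp add: root_perm_def enum_left_perm[OF s])
  next
    case False
    then show ?thesis
      using roots by (simp add: root_perm_def map_permutation_def restrict_id_def)
  qed
qed

lemma evenperm_root_perm: "s \<in> G \<Longrightarrow> evenperm (root_perm G xi s) = evenperm (left_perm s)"
  unfolding root_perm_eq_map_permutation
  by (rule evenperm_map_permutation[OF inj_on_conjugates left_perm_permutes]) simp_all

lemma permutation_root_perm: "s \<in> G \<Longrightarrow> permutation (root_perm G xi s)"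
  unfolding root_perm_eq_map_permutation
  using map_permutation_permutes[OF inj_on_imp_bij_betw[OF inj_on_conjugates] left_perm_permutes]
    permutes_imp_permutation by blast

lemma root_perm_comp:
  assumes "s \<in> G" "t \<in> G"
  shows "root_perm G xi (s \<circ> t) = root_perm G xi s \<circ> root_perm G xi t"
proof
  fix z
  have "t z \<in> (\<lambda>r. r xi) ` G" if z: "z \<in> (\<lambda>r. r xi) ` G"
  proof -
    obtain r where "r \<in> G" "z = r xi" using z by blast
    then show ?thesis using field_auts_comp[OF assms(2)] by (metis comp_apply image_eqI)
  qed
  then show "root_perm G xi (s \<circ> t) z = (root_perm G xi s \<circ> root_perm G xi t) z"
    by (simp add: root_perm_def)
qed

definition sign_aut :: "('a \<Rightarrow> 'a) \<Rightarrow> 'a" where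
  "sign_aut s = (if evenperm (root_perm G xi s) then 1 else -1)"

lemma sign_aut_square: "sign_aut s * sign_aut s = 1"
  by (simp add: sign_aut_def)

lemma aut_Gamma_entry:
  assumes s: "s \<in> G" and "i < d" "k < d"
  shows "s (\<Gamma> $$ (i,k)) = \<Gamma> $$ (left_perm s i, k)"
  using assms by (simp add: Gamma_entry left_perm_less enum_left_perm)

lemma aut_det_Gamma:
  assumes s: "s \<in> G" shows "s (det \<Gamma>) = sign_aut s * det \<Gamma>"
proof -
  interpret field_hom s by (rule field_auts_field_hom[OF s])
  have "map_mat s \<Gamma> = mat d d (\<lambda>(i,k). \<Gamma> $$ (left_perm s i, k))"
    using Gamma_carrier by (intro eq_matI) (auto simp: aut_Gamma_entry[OF s])
  then have "det (map_mat s \<Gamma>) = signof (left_perm s) * det \<Gamma>"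
    using det_permute_rows[OF Gamma_carrier left_perm_permutes[OF s]] by simp
  then have "s (det \<Gamma>) = signof (left_perm s) * det \<Gamma>" unfolding hom_det .
  then show ?thesis by (simp add: sign_aut_def sign_def evenperm_root_perm[OF s])
qed

lemma aut_Gamma_inv:
  assumes s: "s \<in> G" and k: "k < d" and j: "j < d"
  shows "s (Gamma_inv $$ (k,j)) = Gamma_inv $$ (k, left_perm s j)"
proof -
  interpret field_hom s by (rule field_auts_field_hom[OF s])
  let ?A = "map_mat s \<Gamma>"
  let ?B = "mat d d (\<lambda>(k,j). Gamma_inv $$ (k, left_perm s j))"
  have A: "?A \<in> carrier_mat d d" using Gamma_carrier by simp
  have "?A * ?B = 1\<^sub>m d"
    by (rule inverse_mat_permute_rows[OF Gamma_carrier Gamma_inv(3,1) A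
          permutes_imp_bij[OF left_perm_permutes[OF s]]])
       (use Gamma_carrier aut_Gamma_entry[OF s] in simp)
  then have BA: "?B * ?A = 1\<^sub>m d" by (rule mat_mult_left_right_inverse[OF A, rotated]) simp
  have "?A * map_mat s Gamma_inv = map_mat s (\<Gamma> * Gamma_inv)"
    using mat_hom_mult[OF Gamma_carrier Gamma_inv(3)] by simp
  also have "\<dots> = 1\<^sub>m d" by (simp add: Gamma_inv(1) mat_hom_one)
  finally have "map_mat s Gamma_inv = ?B"
    by (intro mat_right_inverse_unique[OF A _ _ BA]) (use Gamma_inv(3) in auto)
  then have "map_mat s Gamma_inv $$ (k,j) = ?B $$ (k,j)" by simp
  then show ?thesis using k j Gamma_inv(3) by simp
qed

lemma aut_partial_xi:
  assumes s: "s \<in> G" and u: "u \<in> G"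
  shows "s (partial_xi d e u xi) = sign_aut s * partial_xi d e (s \<circ> u) xi"
proof -
  interpret field_hom s by (rule field_auts_field_hom[OF s])
  have "s (gamma_inv_fun u) = gamma_inv_fun (s \<circ> u)"
    using aut_Gamma_inv[OF s idx_less[OF id_in_field_auts] idx_less[OF u]]
    by (simp add: gamma_inv_fun_def left_perm_def idx_less[OF u] enum_idx[OF u])
  then show ?thesis
    by (simp add: partial_xi_eq u field_auts_comp[OF s u] aut_det_Gamma[OF s] hom_mult)
qed

section \<open>The sequences attached to conjugacy classes\<close>

lemma conj_class_sequence_closed_form:
  fixes F :: "int poly" and a :: "nat \<Rightarrow> 'a"
  assumes deg: "degree F = d" and monic: "lead_coeff F = 1"
    and root: "poly (map_poly of_int F) xi = 0" and t: "t \<in> G"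
    and init: "\<forall>i<d. a i = (P_mat d e xi * Gamma_inv *\<^sub>v kappa_col d e (conj_class t)) $ i"
    and recur: "\<forall>n. a (n + d) = - (\<Sum>k<d. of_int (coeff F k) * a (n + k))"
  shows "a i = (\<Sum>s\<in>G. \<Sum>u\<in>conj_class t. s (xi ^ i) * partial_xi d e (s \<circ> u) xi) / det \<Gamma>"
proof -
  define W where "W s = (\<Sum>u\<in>conj_class t. partial_xi d e (s \<circ> u) xi) / det \<Gamma>" for s
  have closed_form: "(\<Sum>s\<in>G. \<Sum>u\<in>conj_class t. s (xi ^ i) * partial_xi d e (s \<circ> u) xi) / det \<Gamma>
      = (\<Sum>s\<in>G. s xi ^ i * W s)" for i
  proof -
    have "s (xi ^ i) = s xi ^ i" if "s \<in> G" for s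
    proof -
      interpret field_hom s by (rule field_auts_field_hom[OF that])
      show ?thesis by (rule hom_power)
    qed
    then show ?thesis
      by (simp add: W_def sum_divide_distrib sum_distrib_left times_divide_eq_right)
  qed
  have conjugate_roots: "s xi ^ d = - (\<Sum>k<d. of_int (coeff F k) * s xi ^ k)" if s: "s \<in> G" for s
  proof -
    interpret field_hom s by (rule field_auts_field_hom[OF s])
    have "s (xi ^ d) = s (- (\<Sum>k<d. of_int (coeff F k) * xi ^ k))"
      using monic_root_power_degree[OF monic root] deg by simp
    then show ?thesis unfolding hom_uminus hom_sum hom_mult hom_power hom_of_int .
  qed
  have "a i = (\<Sum>s\<in>G. s xi ^ i * W s)"
  proof (rule linear_recurrence_eqI[where c = "\<lambda>k. of_int (coeff F k)"])
    show "a i = (\<Sum>s\<in>G. s xi ^ i * W s)" if "i < d" for i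
      using init that initial_terms[OF t that] closed_form by simp
    show "(\<Sum>s\<in>G. s xi ^ (n + d) * W s)
        = - (\<Sum>k<d. of_int (coeff F k) * (\<Sum>s\<in>G. s xi ^ (n + k) * W s))" for n
      by (rule sum_powers_linear_recurrence) (rule conjugate_roots)
  qed (use recur in simp)
  then show ?thesis using closed_form by simp
qed

lemma signed_trace_eq:
  assumes K: "K \<subseteq> G"
  shows "(\<Sum>s\<in>G. sign_aut s * s (xi ^ i * (\<Sum>t\<in>K. partial_xi d e t xi)))
       = (\<Sum>s\<in>G. \<Sum>t\<in>K. s (xi ^ i) * partial_xi d e (s \<circ> t) xi)"
proof (rule sum.cong[OF refl])
  fix s assume s: "s \<in> G"
  interpret field_hom s by (rule field_auts_field_hom[OF s])
  have "s (xi ^ i * (\<Sum>t\<in>K. partial_xi d e t xi))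
      = sign_aut s * (\<Sum>t\<in>K. s (xi ^ i) * partial_xi d e (s \<circ> t) xi)"
    using K by (simp add: hom_mult hom_sum aut_partial_xi[OF s] subsetD sum_distrib_left
        mult.left_commute)
  then show "sign_aut s * s (xi ^ i * (\<Sum>t\<in>K. partial_xi d e t xi))
      = (\<Sum>t\<in>K. s (xi ^ i) * partial_xi d e (s \<circ> t) xi)"
    by (simp add: mult.assoc[symmetric] sign_aut_square)
qed

lemma trace_eq_signed_trace:
  assumes "\<forall>s\<in>G. evenperm (root_perm G xi s)"
  shows "trace_on G z = (\<Sum>s\<in>G. sign_aut s * s z)"
  using assms by (simp add: trace_on_def sign_aut_def)

lemma sign_aut_comp:
  assumes "s \<in> G" "t \<in> G"
  shows "sign_aut (s \<circ> t) = sign_aut s * sign_aut t"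
  using evenperm_comp[OF permutation_root_perm[OF assms(1)] permutation_root_perm[OF assms(2)]]
  by (simp add: sign_aut_def root_perm_comp[OF assms])

lemma even_part_trace_eq_signed_trace:
  assumes delta: "delta \<in> G"
    and cover: "G = even_part G xi \<union> (\<lambda>h. delta \<circ> h) ` even_part G xi"
    and disjoint: "even_part G xi \<inter> (\<lambda>h. delta \<circ> h) ` even_part G xi = {}"
  shows "trace_on (even_part G xi) z - delta (trace_on (even_part G xi) z)
    = (\<Sum>s\<in>G. sign_aut s * s z)"
proof -
  let ?E = "even_part G xi"
  interpret field_hom delta by (rule field_auts_field_hom[OF delta])
  have E: "?E \<subseteq> G" and sign_even: "\<And>h. h \<in> ?E \<Longrightarrow> sign_aut h = 1"
    by (auto simp: even_part_def sign_aut_def)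
  have "root_perm G xi id = id" by (auto simp: root_perm_def)
  then have "id \<in> ?E" using id_in_field_auts by (simp add: even_part_def)
  then have "delta \<notin> ?E" using disjoint by (metis comp_id disjoint_iff image_eqI)
  then have sign_delta: "sign_aut delta = -1" using delta by (simp add: even_part_def sign_aut_def)
  have "inj_on (\<lambda>h. delta \<circ> h) ?E"
    by (rule inj_on_subset[OF bij_betw_imp_inj_on[OF bij_betw_field_auts_comp_left[OF delta]] E])
  then have "(\<Sum>s\<in>(\<lambda>h. delta \<circ> h) ` ?E. sign_aut s * s z) = (\<Sum>h\<in>?E. - delta (h z))"
    using E by (simp add: sum.reindex sign_aut_comp[OF delta] sign_delta sign_even subsetD)
  moreover have "(\<Sum>s\<in>G. sign_aut s * s z)
      = (\<Sum>s\<in>?E. sign_aut s * s z) + (\<Sum>s\<in>(\<lambda>h. delta \<circ> h) ` ?E. sign_aut s * s z)"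
    using finite_subset[OF E finite_G] disjoint by (subst cover) (simp add: sum.union_disjoint)
  ultimately show ?thesis
    by (simp add: trace_on_def sign_even hom_sum sum_negf)
qed

end

theorem theorem1p2:
  fixes F :: "int poly" and xi :: "'a::field_char_0"
    and e :: "nat \<Rightarrow> 'a \<Rightarrow> 'a" and K :: "('a \<Rightarrow> 'a) set" and tau0 :: "'a \<Rightarrow> 'a"
    and a :: "nat \<Rightarrow> 'a"
  defines "d \<equiv> degree F" and "G \<equiv> (field_auts :: ('a \<Rightarrow> 'a) set)"
  assumes monic: "lead_coeff F = 1"
    and irr: "irreducible F"
    and root: "poly (map_poly of_int F) xi = 0"
    and gen: "\<forall>x::'a. \<exists>p::rat poly. x = poly (map_poly of_rat p) xi"
    and galois: "card G = d"
    and order: "bij_betw e {..<d} G"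
    and nb: "normal_basis G xi"
    and tau0: "tau0 \<in> G"
    and K: "K = {r \<circ> tau0 \<circ> inv_into UNIV r | r. r \<in> G}"
    and init: "\<forall>i<d. a i = (P_mat d e xi * the (mat_inverse (Gamma_xi d e xi)) *\<^sub>v kappa_col d e K) $ i"
    and recur: "\<forall>n. a (n + d) = - (\<Sum>k<d. of_int (coeff F k) * a (n + k))"
  shows "(\<forall>i. a i = (\<Sum>s\<in>G. \<Sum>t\<in>K. s (xi ^ i) * partial_xi d e (s \<circ> t) xi)
                       / det (Gamma_xi d e xi))
       \<and> ((\<forall>s\<in>G. evenperm (root_perm G xi s)) \<longrightarrow>
           (\<forall>i. a i = trace_on G (xi ^ i * (\<Sum>t\<in>K. partial_xi d e t xi)) / det (Gamma_xi d e xi)))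
       \<and> (\<forall>delta. \<not> (\<forall>s\<in>G. evenperm (root_perm G xi s)) \<longrightarrow> delta \<in> G \<longrightarrow>
           G = even_part G xi \<union> (\<lambda>h. delta \<circ> h) ` even_part G xi \<longrightarrow>
           even_part G xi \<inter> (\<lambda>h. delta \<circ> h) ` even_part G xi = {} \<longrightarrow>
           (\<forall>i. a i = (trace_on (even_part G xi) (xi ^ i * (\<Sum>t\<in>K. partial_xi d e t xi))
                       - delta (trace_on (even_part G xi) (xi ^ i * (\<Sum>t\<in>K. partial_xi d e t xi))))
                       / det (Gamma_xi d e xi)))"
proof -
  have span: "\<forall>x. \<exists>c::('a \<Rightarrow> 'a) \<Rightarrow> rat. x = (\<Sum>s\<in>field_auts. of_rat (c s) * s xi)"
    using nb by (simp add: normal_basis_def G_def)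
  interpret enumerated_normal_basis d e xi
    using order span gen by unfold_locales (simp_all add: G_def)
  have K_class: "K = conj_class tau0" using K by (simp add: conj_class_def G_def)
  have K_sub: "K \<subseteq> field_auts" using conj_class_subset tau0 K_class by (simp add: G_def)
  have "a i = (\<Sum>s\<in>field_auts. \<Sum>t\<in>K. s (xi ^ i) * partial_xi d e (s \<circ> t) xi)
      / det (Gamma_xi d e xi)" for i
    unfolding K_class
    by (rule conj_class_sequence_closed_form[OF _ monic root])
      (use d_def tau0 init recur K_class G_def Gamma_inv_def in auto)
  then show ?thesis
    unfolding G_def
    using signed_trace_eq[OF K_sub] trace_eq_signed_trace even_part_trace_eq_signed_trace
    by simp
qed

end
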